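(* Let $0<R_0,T<\infty$ and let $h:(0,R_0)\times(0,T)\to\mathbb R$ be a smooth function. Define the relative entropy $\mathfrak H(h):=\log\big[(1+h)^2(1+h+xh_x)\big]$. There exist $\varepsilon_*\in(0,1)$ and a constant $C>0$ such that, if for some $0<\varepsilon<\varepsilon_*$ $$\max\Big\{\sup_{x,t}|h|,\ \sup_{x,t}|xh_x|,\ \sup_{x,t}|h_t|,\ \sup_{x,t}|xh_{xt}|\Big\}<\varepsilon,$$ then for every $t\in(0,T)$ $$\int_0^{R_0}\big(h_x^2+x^2h_{xx}^2\big)\,dx\le C\int_0^{R_0}\mathfrak H(h)_x^2\,dx,$$ $$\int_0^{R_0}\big(h_{xt}^2+x^2h_{xxt}^2\big)\,dx\le C\int_0^{R_0}\mathfrak H(h)_{xt}^2\,dx+C\varepsilon\int_0^{R_0}\big(h_x^2+x^2h_{xx}^2\big)\,dx.$$ *)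

theory Defs
  imports "HOL-Analysis.Analysis"
begin

definition dx :: "(real \<Rightarrow> real \<Rightarrow> real) \<Rightarrow> real \<Rightarrow> real \<Rightarrow> real" where
  "dx g = (\<lambda>x t. deriv (\<lambda>y. g y t) x)"

definition dt :: "(real \<Rightarrow> real \<Rightarrow> real) \<Rightarrow> real \<Rightarrow> real \<Rightarrow> real" where
  "dt g = (\<lambda>x t. deriv (\<lambda>s. g x s) t)"

definition iter_partial :: "bool list \<Rightarrow> (real \<Rightarrow> real \<Rightarrow> real) \<Rightarrow> real \<Rightarrow> real \<Rightarrow> real" where
  "iter_partial ws h = foldr (\<lambda>b g. if b then dx g else dt g) ws h"

definition smooth_on_rect :: "real \<Rightarrow> real \<Rightarrow> (real \<Rightarrow> real \<Rightarrow> real) \<Rightarrow> bool" where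
  "smooth_on_rect R0 T h \<longleftrightarrow>
     (\<forall>ws. continuous_on ({0<..<R0} \<times> {0<..<T}) (\<lambda>(x, t). iter_partial ws h x t) \<and>
       (\<forall>x\<in>{0<..<R0}. \<forall>t\<in>{0<..<T}.
          (\<lambda>y. iter_partial ws h y t) differentiable (at x) \<and>
          (\<lambda>s. iter_partial ws h x s) differentiable (at t)))"

definition rel_entropy :: "(real \<Rightarrow> real \<Rightarrow> real) \<Rightarrow> real \<Rightarrow> real \<Rightarrow> real" where
  "rel_entropy h = (\<lambda>x t. ln ((1 + h x t)^2 * (1 + h x t + x * dx h x t)))"

definition sup_abs :: "real \<Rightarrow> real \<Rightarrow> (real \<Rightarrow> real \<Rightarrow> real) \<Rightarrow> ereal" where
  "sup_abs R0 T f = (SUP p\<in>{0<..<R0} \<times> {0<..<T}. ereal \<bar>f (fst p) (snd p)\<bar>)"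

end

theory Submission
  imports Defs
begin

(* Write P = 1 + h and S = 1 + h + x h_x, so that the relative entropy is log (P^2 S) and
   S * H(h)_x = x h_xx + p h_x  with  p = 2 S / P + 2,
   a weight that is close to 4 when h and x h_x are small.  Both estimates then come from a
   weighted Hardy inequality: if |p - 4| <= 1/2 and x v is bounded near 0, then
     int_0^R (v^2 + x^2 v'^2) <= 4 int_0^R (x v' + p v)^2.
   Expanding the square, the cross terms are the derivatives of x v^2 and x^3 v^2; the boundary
   term at R has the right sign, and the one at the origin is bounded by the same integral because
   x^3 v^2 = x (x v)^2 vanishes there.  The inequality is applied to v = h_x, and to v = h_xt, for
   which differentiating the identity in t only adds error terms of size eps (|h_x| + |x h_xx|).
   It is proved on compact subintervals and carried over to (0, R) by monotone convergence. *)

section \<open>Partial derivatives of smooth functions\<close>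

lemma iter_partial_simps [simp]:
  "iter_partial [] h = h"
  "iter_partial (True # ws) h = dx (iter_partial ws h)"
  "iter_partial (False # ws) h = dt (iter_partial ws h)"
  by (simp_all add: iter_partial_def)

lemma continuous_on_slice:
  assumes "continuous_on (A \<times> B) (\<lambda>(x, t). f x t)" "t \<in> B" "S \<subseteq> A"
  shows "continuous_on S (\<lambda>x. f x t)"
proof -
  have "continuous_on S ((\<lambda>(x, t). f x t) \<circ> (\<lambda>x. (x, t)))"
    using assms by (intro continuous_on_compose continuous_intros continuous_on_subset[OF assms(1)]) auto
  then show ?thesis by (simp add: o_def)
qed

lemma smooth_on_rect_continuous_on:
  "smooth_on_rect R T h \<Longrightarrow> continuous_on ({0<..<R} \<times> {0<..<T}) (\<lambda>(x, t). iter_partial ws h x t)"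
  unfolding smooth_on_rect_def by blast

lemma smooth_on_rect_continuous_on_slice:
  "smooth_on_rect R T h \<Longrightarrow> t \<in> {0<..<T} \<Longrightarrow> continuous_on {0<..<R} (\<lambda>x. iter_partial ws h x t)"
  by (rule continuous_on_slice[OF smooth_on_rect_continuous_on]) auto

lemma smooth_on_rect_has_dx:
  assumes "smooth_on_rect R T h" "x \<in> {0<..<R}" "t \<in> {0<..<T}"
  shows "((\<lambda>y. iter_partial ws h y t) has_real_derivative dx (iter_partial ws h) x t) (at x)"
  using assms unfolding smooth_on_rect_def dx_def by (metis DERIV_deriv_iff_real_differentiable)

lemma smooth_on_rect_has_dt:
  assumes "smooth_on_rect R T h" "x \<in> {0<..<R}" "t \<in> {0<..<T}"
  shows "((\<lambda>s. iter_partial ws h x s) has_real_derivative dt (iter_partial ws h) x t) (at t)"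
  using assms unfolding smooth_on_rect_def dt_def by (metis DERIV_deriv_iff_real_differentiable)

context
  fixes R T :: real and k kx kt m :: "real \<Rightarrow> real \<Rightarrow> real"
  assumes k_dx: "\<And>x t. x \<in> {0<..<R} \<Longrightarrow> t \<in> {0<..<T} \<Longrightarrow> ((\<lambda>y. k y t) has_real_derivative kx x t) (at x)"
    and k_dt: "\<And>x t. x \<in> {0<..<R} \<Longrightarrow> t \<in> {0<..<T} \<Longrightarrow> ((\<lambda>s. k x s) has_real_derivative kt x t) (at t)"
    and kx_dt: "\<And>x t. x \<in> {0<..<R} \<Longrightarrow> t \<in> {0<..<T} \<Longrightarrow> ((\<lambda>s. kx x s) has_real_derivative m x t) (at t)"
    and kx_cont: "continuous_on ({0<..<R} \<times> {0<..<T}) (\<lambda>(x, t). kx x t)"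
    and m_cont: "continuous_on ({0<..<R} \<times> {0<..<T}) (\<lambda>(x, t). m x t)"
begin

lemma k_eq_integral_kx:
  assumes "a \<le> x" "0 < a" "x < R" "s \<in> {0<..<T}"
  shows "k x s = k a s + integral {a..x} (\<lambda>y. kx y s)"
proof -
  have "((\<lambda>y. kx y s) has_integral (k x s - k a s)) {a..x}"
  proof (rule fundamental_theorem_of_calculus[OF assms(1)])
    fix y assume "y \<in> {a..x}"
    with assms k_dx[of y s] show "((\<lambda>y. k y s) has_vector_derivative kx y s) (at y within {a..x})"
      by (simp add: has_real_derivative_iff_has_vector_derivative has_vector_derivative_at_within)
  qed
  then show ?thesis by (simp add: integral_unique)
qed

lemma integral_kx_has_derivative:
  assumes a: "0 < a" "x < R" and t: "t \<in> {0<..<T}"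
  shows "((\<lambda>s. integral {a..x} (\<lambda>y. kx y s)) has_real_derivative integral {a..x} (\<lambda>y. m y t)) (at t)"
proof -
  have "continuous_on ({0<..<T} \<times> cbox a x) (\<lambda>p. (\<lambda>(y, s). m y s) (snd p, fst p))"
  proof (rule continuous_on_compose2[OF m_cont])
    show "(\<lambda>p. (snd p, fst p)) ` ({0<..<T} \<times> cbox a x) \<subseteq> {0<..<R} \<times> {0<..<T}"
      using a by force
  qed (intro continuous_intros)
  then have "continuous_on ({0<..<T} \<times> cbox a x) (\<lambda>(s, y). m y s)"
    by (simp add: split_beta)
  then have "((\<lambda>s. integral (cbox a x) (\<lambda>y. kx y s)) has_field_derivative integral (cbox a x) (\<lambda>y. m y t))
      (at t within {0<..<T})"
  proof (rule leibniz_rule_field_derivative[where fx = "\<lambda>s y. m y s", rotated 2])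
    fix s y assume "s \<in> {0<..<T}" "y \<in> cbox a x"
    with a kx_dt[of y s] show "((\<lambda>s. kx y s) has_field_derivative m y s) (at s within {0<..<T})"
      by (auto intro: has_field_derivative_at_within)
  next
    fix s assume "s \<in> {0<..<T}"
    with a show "(\<lambda>y. kx y s) integrable_on cbox a x"
      by (intro integrable_continuous continuous_on_slice[OF kx_cont]) auto
  qed (use t in auto)
  then show ?thesis
    using at_within_open[OF t open_greaterThanLessThan] by (simp only: box_real)
qed

lemma kt_eq_integral_mixed:
  assumes a: "0 < a" "a \<le> x" "x < R" and t: "t \<in> {0<..<T}"
  shows "kt x t = kt a t + integral {a..x} (\<lambda>s. m s t)"
proof -
  have "((\<lambda>s. k a s + integral {a..x} (\<lambda>y. kx y s)) has_real_derivative kt a t + integral {a..x} (\<lambda>y. m y t)) (at t)"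
    using a t by (intro DERIV_add k_dt integral_kx_has_derivative) auto
  then have "((\<lambda>s. k x s) has_real_derivative kt a t + integral {a..x} (\<lambda>y. m y t)) (at t)"
    by (rule has_field_derivative_transform_within_open[where S = "{0<..<T}"])
      (use a t k_eq_integral_kx in auto)
  moreover have "((\<lambda>s. k x s) has_real_derivative kt x t) (at t)"
    using a t by (intro k_dt) auto
  ultimately show ?thesis using DERIV_unique by blast
qed

lemma mixed_partials_commute:
  assumes x: "x \<in> {0<..<R}" and t: "t \<in> {0<..<T}"
  shows "((\<lambda>y. kt y t) has_real_derivative m x t) (at x)"
proof -
  define a b where "a = x / 2" and "b = (x + R) / 2"
  have ab: "0 < a" "a < x" "x < b" "b < R" using x by (auto simp: a_def b_def)
  have "((\<lambda>u. integral {a..u} (\<lambda>y. m y t)) has_vector_derivative m x t) (at x within {a..b})"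
    using ab t by (intro integral_has_vector_derivative continuous_on_slice[OF m_cont]) auto
  then have "((\<lambda>u. integral {a..u} (\<lambda>y. m y t)) has_real_derivative m x t) (at x)"
    using ab by (simp add: at_within_Icc_at has_real_derivative_iff_has_vector_derivative)
  then have "((\<lambda>u. kt a t + integral {a..u} (\<lambda>y. m y t)) has_real_derivative m x t) (at x)"
    using DERIV_add[OF DERIV_const[of "kt a t"]] by simp
  then show ?thesis
  proof (rule has_field_derivative_transform_within_open[where S = "{a<..<R}"])
    fix y assume "y \<in> {a<..<R}"
    then show "kt a t + integral {a..y} (\<lambda>s. m s t) = kt y t"
      using ab t by (intro kt_eq_integral_mixed[symmetric]) auto
  qed (use ab in auto)
qed

end

lemma smooth_on_rect_has_dx_dt_dx:
  assumes smooth: "smooth_on_rect R T h" and x: "x \<in> {0<..<R}" and t: "t \<in> {0<..<T}"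
  shows "((\<lambda>y. dt (dx h) y t) has_real_derivative dt (dx (dx h)) x t) (at x)"
proof (rule mixed_partials_commute[where k = "dx h" and kx = "dx (dx h)", OF _ _ _ _ _ x t])
  show "continuous_on ({0<..<R} \<times> {0<..<T}) (\<lambda>(x, t). dx (dx h) x t)"
    using smooth_on_rect_continuous_on[OF smooth, of "[True, True]"] by simp
  show "continuous_on ({0<..<R} \<times> {0<..<T}) (\<lambda>(x, t). dt (dx (dx h)) x t)"
    using smooth_on_rect_continuous_on[OF smooth, of "[False, True, True]"] by simp
qed (use smooth_on_rect_has_dx[OF smooth, of _ _ "[True]"] smooth_on_rect_has_dt[OF smooth, of _ _ "[True]"]
  smooth_on_rect_has_dt[OF smooth, of _ _ "[True, True]"] in auto)

section \<open>From compact subintervals to the open interval\<close>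

lemma integrable_on_Icc_if_continuous_on_Ioo:
  fixes f :: "real \<Rightarrow> real"
  assumes "continuous_on {c<..<d} f" "c < e" "b < d"
  shows "f integrable_on {e..b}"
  using assms by (intro integrable_continuous_interval) (auto elim: continuous_on_subset)

lemma borel_measurable_ennreal_indicator_continuous_on:
  fixes g :: "'a::topological_space \<Rightarrow> real"
  assumes "S \<in> sets borel" "continuous_on S g"
  shows "(\<lambda>x. ennreal (g x) * indicator S x) \<in> borel_measurable borel"
proof -
  have "(\<lambda>x. indicator S x *\<^sub>R g x) \<in> borel_measurable borel"
    by (rule borel_measurable_continuous_on_indicator[OF assms])
  then have "(\<lambda>x. ennreal (indicator S x *\<^sub>R g x)) \<in> borel_measurable borel"
    by measurable
  also have "(\<lambda>x. ennreal (indicator S x *\<^sub>R g x)) = (\<lambda>x. ennreal (g x) * indicator S x)"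
    by (auto simp: indicator_def fun_eq_iff)
  finally show ?thesis .
qed

lemma SUP_indicator_eq_indicator_UN: "(SUP n. indicator (A n) x :: ennreal) = indicator (\<Union>n. A n) x"
proof (cases "\<exists>n. x \<in> A n")
  case True
  then obtain n where "x \<in> A n" by blast
  then have "1 \<le> (SUP n. indicator (A n) x :: ennreal)" by (intro SUP_upper2[of n]) auto
  moreover have "(SUP n. indicator (A n) x :: ennreal) \<le> 1" by (intro SUP_least) (auto simp: indicator_def)
  ultimately show ?thesis using True by auto
qed auto

lemma nn_integral_Ioo_ge_integral_Icc:
  fixes g :: "real \<Rightarrow> real"
  assumes "continuous_on {0<..<R} g" "\<And>x. 0 < x \<Longrightarrow> x < R \<Longrightarrow> 0 \<le> g x"
    and "0 < e" "e \<le> b" "b < R"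
  shows "ennreal (integral {e..b} g) \<le> (\<integral>\<^sup>+x\<in>{0<..<R}. ennreal (g x) \<partial>lborel)"
proof -
  have "(g has_integral integral {e..b} g) {e..b}"
    using assms by (intro integrable_integral integrable_on_Icc_if_continuous_on_Ioo[where c = 0 and d = R])
  then have "(\<integral>\<^sup>+x. ennreal (g x) * indicator {e..b} x \<partial>lborel) = ennreal (integral {e..b} g)"
    by (rule nn_integral_has_integral_lebesgue'[rotated]) (use assms in auto)
  moreover have "(\<integral>\<^sup>+x. ennreal (g x) * indicator {e..b} x \<partial>lborel) \<le> (\<integral>\<^sup>+x\<in>{0<..<R}. ennreal (g x) \<partial>lborel)"
    using assms by (intro nn_integral_mono) (auto simp: indicator_def)
  ultimately show ?thesis by simp
qed

lemma UN_Icc_shrinking_eq_Ioo: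
  fixes R :: real
  assumes R: "0 < R"
  shows "(\<Union>n. {R / (real n + 3)..R - R / (real n + 3)}) = {0<..<R}"
proof (intro equalityI subsetI)
  fix x assume "x \<in> {0<..<R}"
  then have m: "0 < min x (R - x)" by auto
  obtain N :: nat where "R / min x (R - x) < real N" using reals_Archimedean2 by blast
  then have "R < min x (R - x) * real N"
    using m by (simp add: divide_less_eq mult.commute)
  also have "\<dots> \<le> min x (R - x) * (real N + 3)"
    using m by (intro mult_left_mono) auto
  finally have "R / (real N + 3) \<le> min x (R - x)" by (subst pos_divide_le_eq) auto
  then show "x \<in> (\<Union>n. {R / (real n + 3)..R - R / (real n + 3)})" by auto
next
  fix x assume "x \<in> (\<Union>n. {R / (real n + 3)..R - R / (real n + 3)})"
  then obtain n where "R / (real n + 3) \<le> x" "x \<le> R - R / (real n + 3)" by auto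
  moreover have "0 < R / (real n + 3)" using R by simp
  ultimately show "x \<in> {0<..<R}" by auto
qed

lemma nn_integral_Ioo_le_if_integral_Icc_le:
  fixes g :: "real \<Rightarrow> real"
  assumes R: "0 < R" and g_cont: "continuous_on {0<..<R} g"
    and g_nonneg: "\<And>x. 0 < x \<Longrightarrow> x < R \<Longrightarrow> 0 \<le> g x"
    and le: "\<And>e b. 0 < e \<Longrightarrow> e \<le> b \<Longrightarrow> b < R \<Longrightarrow> integral {e..b} g \<le> X"
  shows "(\<integral>\<^sup>+x\<in>{0<..<R}. ennreal (g x) \<partial>lborel) \<le> ennreal X"
proof -
  define E where "E n = R / (real n + 3)" for n :: nat
  define F where "F n x = ennreal (g x) * indicator {E n..R - E n} x" for n x
  have E: "0 < E n" "E n \<le> R - E n" for n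
    using R by (auto simp: E_def field_simps)
  have E_antimono: "E n \<le> E m" if "m \<le> n" for m n
    using R that unfolding E_def by (intro divide_left_mono) auto
  have "incseq F"
    using E_antimono by (auto simp: incseq_def le_fun_def F_def indicator_def intro: order_trans)
  moreover have F_measurable: "F n \<in> borel_measurable lborel" for n
    unfolding F_def using E[of n] R
    by (auto intro!: borel_measurable_ennreal_indicator_continuous_on continuous_on_subset[OF g_cont])
  moreover have "(\<Union>n. {E n..R - E n}) = {0<..<R}"
    unfolding E_def by (rule UN_Icc_shrinking_eq_Ioo[OF R])
  then have "ennreal (g x) * indicator {0<..<R} x = (SUP n. F n x)" for x
    by (simp add: F_def SUP_mult_left_ennreal[symmetric] SUP_indicator_eq_indicator_UN)
  ultimately have "(\<integral>\<^sup>+x\<in>{0<..<R}. ennreal (g x) \<partial>lborel) = (SUP n. integral\<^sup>N lborel (F n))"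
    by (simp add: nn_integral_monotone_convergence_SUP)
  also have "\<dots> \<le> ennreal X"
  proof (rule SUP_least)
    fix n
    have "(g has_integral integral {E n..R - E n} g) {E n..R - E n}"
      using E[of n] by (intro integrable_integral integrable_on_Icc_if_continuous_on_Ioo[OF g_cont]) auto
    then have "integral\<^sup>N lborel (F n) = ennreal (integral {E n..R - E n} g)"
      unfolding F_def by (rule nn_integral_has_integral_lebesgue'[rotated]) (use E[of n] g_nonneg in auto)
    also have "\<dots> \<le> ennreal X"
      using E[of n] by (intro ennreal_leI le) auto
    finally show "integral\<^sup>N lborel (F n) \<le> ennreal X" .
  qed
  finally show ?thesis .
qed

lemma set_nn_integral_ennreal_mono:
  "(\<And>x. x \<in> A \<Longrightarrow> f x \<le> g x) \<Longrightarrow> (\<integral>\<^sup>+x\<in>A. ennreal (f x) \<partial>M) \<le> (\<integral>\<^sup>+x\<in>A. ennreal (g x) \<partial>M)"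
  by (intro nn_integral_mono) (auto simp: indicator_def intro: ennreal_leI)

lemma set_nn_integral_ennreal_cmult:
  fixes f :: "real \<Rightarrow> real"
  assumes "S \<in> sets borel" "continuous_on S f" "0 \<le> c"
  shows "(\<integral>\<^sup>+x\<in>S. ennreal (c * f x) \<partial>lborel) = ennreal c * (\<integral>\<^sup>+x\<in>S. ennreal (f x) \<partial>lborel)"
proof -
  have "(\<integral>\<^sup>+x\<in>S. ennreal (c * f x) \<partial>lborel) = (\<integral>\<^sup>+x. ennreal c * (ennreal (f x) * indicator S x) \<partial>lborel)"
    using assms(3) by (intro nn_integral_cong) (simp add: ennreal_mult' mult.assoc)
  also have "\<dots> = ennreal c * (\<integral>\<^sup>+x\<in>S. ennreal (f x) \<partial>lborel)"
    using borel_measurable_ennreal_indicator_continuous_on[OF assms(1,2)] by (simp add: nn_integral_cmult)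
  finally show ?thesis .
qed

lemma set_nn_integral_ennreal_lincomb:
  fixes f g :: "real \<Rightarrow> real"
  assumes "S \<in> sets borel" "continuous_on S f" "continuous_on S g"
    and "\<And>x. x \<in> S \<Longrightarrow> 0 \<le> f x" "\<And>x. x \<in> S \<Longrightarrow> 0 \<le> g x" "0 \<le> a" "0 \<le> b"
  shows "(\<integral>\<^sup>+x\<in>S. ennreal (a * f x + b * g x) \<partial>lborel)
    = ennreal a * (\<integral>\<^sup>+x\<in>S. ennreal (f x) \<partial>lborel) + ennreal b * (\<integral>\<^sup>+x\<in>S. ennreal (g x) \<partial>lborel)"
proof -
  have "(\<integral>\<^sup>+x\<in>S. ennreal (a * f x + b * g x) \<partial>lborel)
      = (\<integral>\<^sup>+x. ennreal a * (ennreal (f x) * indicator S x) + ennreal b * (ennreal (g x) * indicator S x) \<partial>lborel)"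
    using assms(4-7) by (intro nn_integral_cong) (auto simp: indicator_def ennreal_plus ennreal_mult)
  also have "\<dots> = ennreal a * (\<integral>\<^sup>+x\<in>S. ennreal (f x) \<partial>lborel) + ennreal b * (\<integral>\<^sup>+x\<in>S. ennreal (g x) \<partial>lborel)"
  proof -
    have [measurable]: "(\<lambda>x. ennreal (f x) * indicator S x) \<in> borel_measurable lborel"
      "(\<lambda>x. ennreal (g x) * indicator S x) \<in> borel_measurable lborel"
      using assms(1-3) by (simp_all add: borel_measurable_ennreal_indicator_continuous_on)
    then show ?thesis by (subst nn_integral_add) (measurable, simp add: nn_integral_cmult)
  qed
  finally show ?thesis .
qed

section \<open>A weighted Hardy inequality\<close>

lemma le_if_le_add_small_multiple:
  fixes X Y K a :: real
  assumes "0 < a" and le: "\<And>e. 0 < e \<Longrightarrow> e < a \<Longrightarrow> X \<le> Y + e * K"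
  shows "X \<le> Y"
proof (rule field_le_epsilon)
  fix d :: real assume "0 < d"
  define e where "e = min (a / 2) (d / (\<bar>K\<bar> + 1))"
  have e: "0 < e" "e < a" using \<open>0 < a\<close> \<open>0 < d\<close> by (auto simp: e_def)
  have "e * K \<le> e * \<bar>K\<bar>" using e by (simp add: mult_left_mono)
  also have "\<dots> \<le> d / (\<bar>K\<bar> + 1) * \<bar>K\<bar>" by (intro mult_right_mono) (auto simp: e_def)
  also have "\<dots> \<le> d" using \<open>0 < d\<close> by (simp add: divide_le_eq)
  finally show "X \<le> Y + d" using le[OF e] by linarith
qed

lemma has_integral_power_mult_sq:
  fixes v v' :: "real \<Rightarrow> real"
  assumes "e \<le> b" and "\<And>x. x \<in> {e..b} \<Longrightarrow> (v has_real_derivative v' x) (at x)"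
  shows "((\<lambda>x. real n * x ^ (n - 1) * v x^2 + 2 * x ^ n * v x * v' x)
    has_integral (b ^ n * v b^2 - e ^ n * v e^2)) {e..b}"
proof (rule fundamental_theorem_of_calculus[OF assms(1)])
  fix x assume "x \<in> {e..b}"
  then have "((\<lambda>x. x ^ n * v x^2) has_real_derivative
      real n * x ^ (n - 1) * v x^2 + 2 * x ^ n * v x * v' x) (at x)"
    by (auto intro!: derivative_eq_intros assms(2) simp: algebra_simps)
  then show "((\<lambda>x. x ^ n * v x^2) has_vector_derivative
      real n * x ^ (n - 1) * v x^2 + 2 * x ^ n * v x * v' x) (at x within {e..b})"
    by (simp add: has_real_derivative_iff_has_vector_derivative[symmetric] has_field_derivative_at_within)
qed

lemma square_perturbed_ge_energy_plus_flux:
  fixes a b u :: real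
  assumes "\<bar>u\<bar> \<le> 1"
  shows "(a^2 + b^2) / 2 + 4 * (b^2 + 2 * a * b) \<le> (a + (4 + u) * b)^2"
proof -
  have "(a + (4 + u) * b)^2 - ((a^2 + b^2) / 2 + 4 * (b^2 + 2 * a * b))
      = (a + 2 * u * b)^2 / 2 + (23/2 + 8 * u - u^2) * b^2"
    by (simp add: power2_eq_square field_simps)
  moreover have "0 \<le> 23/2 + 8 * u - u^2"
    using assms abs_square_le_1[of u] by (simp add: abs_le_iff)
  ultimately show ?thesis
    by (smt (verit) zero_le_power2 mult_nonneg_nonneg zero_le_divide_iff)
qed

lemma square_perturbed_ge_flux:
  fixes a b u :: real
  assumes "- 1/2 \<le> u"
  shows "4 * (3 * b^2 + 2 * a * b) \<le> (a + (4 + u) * b)^2"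
proof -
  have "(a + (4 + u) * b)^2 - 4 * (3 * b^2 + 2 * a * b) = (a + u * b)^2 + (4 + 8 * u) * b^2"
    by (simp add: power2_eq_square algebra_simps)
  moreover have "0 \<le> (4 + 8 * u) * b^2" using assms by simp
  ultimately show ?thesis by (smt (verit) zero_le_power2)
qed

context
  fixes R M :: real and v v' p :: "real \<Rightarrow> real"
  assumes v_deriv: "\<And>x. 0 < x \<Longrightarrow> x < R \<Longrightarrow> (v has_real_derivative v' x) (at x)"
    and v'_cont: "continuous_on {0<..<R} v'"
    and p_cont: "continuous_on {0<..<R} p"
    and p_near_4: "\<And>x. 0 < x \<Longrightarrow> x < R \<Longrightarrow> \<bar>p x - 4\<bar> \<le> 1/2"
    and x_v_bounded: "\<And>x. 0 < x \<Longrightarrow> x < R \<Longrightarrow> \<bar>x * v x\<bar> \<le> M"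
begin

lemmas hardy_integrable = integrable_on_Icc_if_continuous_on_Ioo[where c = 0 and d = R]

lemma hardy_v_cont: "continuous_on {0<..<R} v"
  by (rule continuous_at_imp_continuous_on) (metis DERIV_isCont v_deriv greaterThanLessThan_iff)

lemma hardy_square_cont: "continuous_on {0<..<R} (\<lambda>x. (x * v' x + p x * v x)^2)"
  by (intro continuous_intros hardy_v_cont v'_cont p_cont)

lemma hardy_square_integrable: "0 < e \<Longrightarrow> b < R \<Longrightarrow> (\<lambda>x. (x * v' x + p x * v x)^2) integrable_on {e..b}"
  by (rule hardy_integrable[OF hardy_square_cont])

lemma hardy_x3_flux_le:
  assumes Q: "\<And>e b. 0 < e \<Longrightarrow> e \<le> b \<Longrightarrow> b < R \<Longrightarrow> integral {e..b} (\<lambda>x. (x * v' x + p x * v x)^2) \<le> Q"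
    and e: "0 < e" "e \<le> a" "a < R"
  shows "4 * (a^3 * v a^2 - e^3 * v e^2) \<le> a^2 * Q"
proof -
  have "((\<lambda>x. real 3 * x ^ (3 - 1) * v x^2 + 2 * x ^ 3 * v x * v' x) has_integral (a ^ 3 * v a^2 - e ^ 3 * v e^2)) {e..a}"
    using e by (intro has_integral_power_mult_sq v_deriv) auto
  from has_integral_mult_right[OF this, of 4]
  have "4 * (a^3 * v a^2 - e^3 * v e^2) = integral {e..a} (\<lambda>x. 4 * (3 * x^2 * v x^2 + 2 * x^3 * v x * v' x))"
    by (simp add: integral_unique)
  also have "\<dots> \<le> integral {e..a} (\<lambda>x. a^2 * (x * v' x + p x * v x)^2)"
  proof (rule integral_le)
    show "(\<lambda>x. 4 * (3 * x^2 * v x^2 + 2 * x^3 * v x * v' x)) integrable_on {e..a}"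
      "(\<lambda>x. a^2 * (x * v' x + p x * v x)^2) integrable_on {e..a}"
      using e by (intro hardy_integrable continuous_intros hardy_v_cont v'_cont p_cont; simp)+
    fix x assume x: "x \<in> {e..a}"
    have "\<bar>p x - 4\<bar> \<le> 1/2" using x e by (intro p_near_4) auto
    then have "4 * (3 * v x^2 + 2 * (x * v' x) * v x) \<le> (x * v' x + (4 + (p x - 4)) * v x)^2"
      by (intro square_perturbed_ge_flux) linarith
    then have "x^2 * (4 * (3 * v x^2 + 2 * (x * v' x) * v x)) \<le> x^2 * (x * v' x + p x * v x)^2"
      by (intro mult_left_mono) auto
    also have "\<dots> \<le> a^2 * (x * v' x + p x * v x)^2"
      using x e by (intro mult_right_mono power_mono) auto
    finally show "4 * (3 * x^2 * v x^2 + 2 * x^3 * v x * v' x) \<le> a^2 * (x * v' x + p x * v x)^2"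
      by (simp add: power2_eq_square power3_eq_cube algebra_simps)
  qed
  also have "\<dots> \<le> a^2 * Q"
    using Q[of e a] e by (simp add: mult_left_mono)
  finally show ?thesis .
qed

lemma hardy_boundary_term:
  assumes Q: "\<And>e b. 0 < e \<Longrightarrow> e \<le> b \<Longrightarrow> b < R \<Longrightarrow> integral {e..b} (\<lambda>x. (x * v' x + p x * v x)^2) \<le> Q"
    and a: "0 < a" "a < R"
  shows "4 * a * v a^2 \<le> Q"
proof -
  have "4 * (a^3 * v a^2) \<le> a^2 * Q + e * (4 * M^2)" if e: "0 < e" "e < a" for e
  proof -
    have "4 * (a^3 * v a^2) \<le> a^2 * Q + 4 * (e * (e * v e)^2)"
      using hardy_x3_flux_le[OF Q e(1) _ a(2)] e by (simp add: power2_eq_square power3_eq_cube algebra_simps)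
    moreover have "e * (e * v e)^2 \<le> e * M^2"
    proof (intro mult_left_mono)
      show "(e * v e)^2 \<le> M^2"
        using power_mono[of "\<bar>e * v e\<bar>" M 2] x_v_bounded[of e] e a by simp
    qed (use e in simp)
    ultimately show ?thesis by linarith
  qed
  then have "4 * (a^3 * v a^2) \<le> a^2 * Q"
    by (rule le_if_le_add_small_multiple[OF a(1)])
  then have "a^2 * (4 * a * v a^2) \<le> a^2 * Q"
    by (simp add: power2_eq_square power3_eq_cube algebra_simps)
  then show ?thesis using a by simp
qed

lemma hardy_integral_Icc:
  assumes Q: "\<And>e b. 0 < e \<Longrightarrow> e \<le> b \<Longrightarrow> b < R \<Longrightarrow> integral {e..b} (\<lambda>x. (x * v' x + p x * v x)^2) \<le> Q"
    and eb: "0 < e" "e \<le> b" "b < R"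
  shows "integral {e..b} (\<lambda>x. v x^2 + x^2 * v' x^2) \<le> 4 * Q"
proof -
  have flux: "((\<lambda>x. real 1 * x ^ (1 - 1) * v x^2 + 2 * x ^ 1 * v x * v' x) has_integral (b ^ 1 * v b^2 - e ^ 1 * v e^2)) {e..b}"
    using eb by (intro has_integral_power_mult_sq v_deriv) auto
  then have flux': "((\<lambda>x. 4 * (v x^2 + 2 * x * v x * v' x)) has_integral 4 * (b * v b^2 - e * v e^2)) {e..b}"
    by (intro has_integral_mult_right) simp
  have "integral {e..b} (\<lambda>x. (v x^2 + x^2 * v' x^2) / 2)
      \<le> integral {e..b} (\<lambda>x. (x * v' x + p x * v x)^2 - 4 * (v x^2 + 2 * x * v x * v' x))"
  proof (rule integral_le)
    show "(\<lambda>x. (v x^2 + x^2 * v' x^2) / 2) integrable_on {e..b}"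
      using eb by (intro hardy_integrable continuous_intros hardy_v_cont v'_cont) auto
    show "(\<lambda>x. (x * v' x + p x * v x)^2 - 4 * (v x^2 + 2 * x * v x * v' x)) integrable_on {e..b}"
      using eb flux' by (intro integrable_diff hardy_square_integrable) auto
    fix x assume x: "x \<in> {e..b}"
    have "((x * v' x)^2 + v x^2) / 2 + 4 * (v x^2 + 2 * (x * v' x) * v x) \<le> (x * v' x + (4 + (p x - 4)) * v x)^2"
      using p_near_4[of x] x eb by (intro square_perturbed_ge_energy_plus_flux) auto
    then show "(v x^2 + x^2 * v' x^2) / 2 \<le> (x * v' x + p x * v x)^2 - 4 * (v x^2 + 2 * x * v x * v' x)"
      by (simp add: power_mult_distrib algebra_simps)
  qed
  also have "\<dots> = integral {e..b} (\<lambda>x. (x * v' x + p x * v x)^2) - 4 * (b * v b^2 - e * v e^2)"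
    using eb flux' by (simp add: integral_diff hardy_square_integrable integral_unique has_integral_integrable)
  also have "\<dots> \<le> Q + 4 * (e * v e^2)"
  proof -
    have "0 \<le> b * v b^2" using eb by simp
    then show ?thesis using Q[OF eb] by (simp add: right_diff_distrib)
  qed
  also have "\<dots> \<le> 2 * Q"
    using hardy_boundary_term[OF Q, of e] eb by (simp add: mult.assoc)
  finally show ?thesis by simp
qed

lemma hardy_nn_integral:
  assumes "0 < R"
  shows "(\<integral>\<^sup>+x\<in>{0<..<R}. ennreal (v x^2 + x^2 * v' x^2) \<partial>lborel)
    \<le> 4 * (\<integral>\<^sup>+x\<in>{0<..<R}. ennreal ((x * v' x + p x * v x)^2) \<partial>lborel)"
proof (cases "(\<integral>\<^sup>+x\<in>{0<..<R}. ennreal ((x * v' x + p x * v x)^2) \<partial>lborel)" rule: ennreal_cases)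
  case (real Q)
  have "integral {e..b} (\<lambda>x. (x * v' x + p x * v x)^2) \<le> Q" if "0 < e" "e \<le> b" "b < R" for e b
    using nn_integral_Ioo_ge_integral_Icc[OF hardy_square_cont _ that] real by (simp add: ennreal_le_iff)
  then have "(\<integral>\<^sup>+x\<in>{0<..<R}. ennreal (v x^2 + x^2 * v' x^2) \<partial>lborel) \<le> ennreal (4 * Q)"
    by (intro nn_integral_Ioo_le_if_integral_Icc_le assms hardy_integral_Icc)
      (auto intro!: continuous_intros hardy_v_cont v'_cont)
  then show ?thesis using real by (simp add: ennreal_mult)
qed (simp add: ennreal_mult_top)

end

section \<open>The relative entropy\<close>

lemma abs_weight_sub_4_le:
  fixes P S :: real
  assumes "99/100 \<le> P" "\<bar>S - P\<bar> \<le> 1/100"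
  shows "\<bar>(2 * S / P + 2) - 4\<bar> \<le> 1/2"
proof -
  have "\<bar>(2 * S / P + 2) - 4\<bar> = \<bar>2 * (S - P) / P\<bar>"
    using assms(1) by (intro arg_cong[where f = abs]) (simp add: field_simps)
  also have "\<dots> = 2 * \<bar>S - P\<bar> / P"
    using assms(1) by (simp only: abs_divide abs_mult)
  also have "\<dots> \<le> 2 * (1/100) / (99/100)"
    using assms by (intro frac_le) auto
  finally show ?thesis by (simp add: algebra_simps)
qed

lemma weighted_dx_le_dx_entropy:
  fixes P S h1 h2 x :: real
  assumes "P \<noteq> 0" "S \<noteq> 0" "S^2 \<le> 2"
  shows "(x * h2 + (2 * S / P + 2) * h1)^2 \<le> 2 * (2 * h1 / P + (2 * h1 + x * h2) / S)^2"
proof -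
  have "(x * h2 + (2 * S / P + 2) * h1)^2 = S^2 * (2 * h1 / P + (2 * h1 + x * h2) / S)^2"
    using assms(1,2) by (simp add: field_simps power2_eq_square)
  also have "\<dots> \<le> 2 * (2 * h1 / P + (2 * h1 + x * h2) / S)^2"
    using assms(3) by (intro mult_right_mono) auto
  finally show ?thesis .
qed

lemma square_le_of_abs_le_sum:
  fixes z a b c :: real
  assumes "\<bar>z\<bar> \<le> c * (\<bar>a\<bar> + \<bar>b\<bar>)"
  shows "z^2 \<le> 2 * c^2 * (a^2 + b^2)"
proof -
  have "z^2 \<le> (c * (\<bar>a\<bar> + \<bar>b\<bar>))^2"
    using assms abs_ge_zero[of z] by (metis abs_le_square_iff abs_of_nonneg order_trans)
  also have "\<dots> = c^2 * (\<bar>a\<bar> + \<bar>b\<bar>)^2"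
    by (rule power_mult_distrib)
  also have "\<dots> \<le> c^2 * (2 * (a^2 + b^2))"
    using zero_le_power2[of "\<bar>a\<bar> - \<bar>b\<bar>"] by (intro mult_left_mono) (simp_all add: power2_eq_square algebra_simps)
  finally show ?thesis by (simp add: algebra_simps)
qed

(* The terms of the t-derivative of S * H(h)_x = x h_xx + p h_x in which the derivative falls
   on P or on S. *)
lemma entropy_dt_error_bound:
  fixes P S h1 h2 g0 g1 x \<epsilon> :: real
  assumes P: "99/100 \<le> P" and S: "98/100 \<le> S" "S \<le> 102/100"
    and g: "\<bar>g0\<bar> < \<epsilon>" "\<bar>x * g1\<bar> < \<epsilon>" and \<epsilon>: "\<epsilon> \<le> 1/100"
  shows "(2 * h1 * g0 * S / P^2 + (2 * h1 + x * h2) * (g0 + x * g1) / S)^2 \<le> \<epsilon> * (h1^2 + x^2 * h2^2)"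
proof -
  define A where "A = 2 * h1 * g0 * S / P^2"
  define B where "B = (2 * h1 + x * h2) * (g0 + x * g1) / S"
  have "S / P^2 \<le> 21/20"
    using P S mult_mono[OF P P] by (simp add: power2_eq_square pos_divide_le_eq)
  then have "\<bar>g0\<bar> * (S / P^2) \<le> \<epsilon> * (21/20)"
    using g(1) S by (intro mult_mono) auto
  then have "2 * \<bar>h1\<bar> * (\<bar>g0\<bar> * (S / P^2)) \<le> 2 * \<bar>h1\<bar> * (\<epsilon> * (21/20))"
    by (intro mult_left_mono) auto
  moreover have "\<bar>A\<bar> = 2 * \<bar>h1\<bar> * (\<bar>g0\<bar> * (S / P^2))"
    using S unfolding A_def by (simp add: abs_mult abs_divide)
  ultimately have A_bound: "\<bar>A\<bar> \<le> 21/10 * (\<epsilon> * \<bar>h1\<bar>)"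
    by (simp add: algebra_simps)
  have "\<epsilon> * 2 \<le> \<epsilon> * (21/10 * S)"
    using g S by (intro mult_left_mono) auto
  then have g_bound: "\<bar>g0 + x * g1\<bar> / S \<le> 21/10 * \<epsilon>"
    using g S abs_triangle_ineq[of g0 "x * g1"] by (simp add: pos_divide_le_eq)
  have "\<bar>B\<bar> = \<bar>2 * h1 + x * h2\<bar> * (\<bar>g0 + x * g1\<bar> / S)"
    using S unfolding B_def by (simp add: abs_mult abs_divide)
  also have "\<dots> \<le> (2 * \<bar>h1\<bar> + \<bar>x * h2\<bar>) * (21/10 * \<epsilon>)"
  proof (rule mult_mono[OF _ g_bound])
    show "\<bar>2 * h1 + x * h2\<bar> \<le> 2 * \<bar>h1\<bar> + \<bar>x * h2\<bar>"
      using abs_triangle_ineq[of "2 * h1" "x * h2"] by (simp add: abs_mult)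
  qed (use S in auto)
  finally have B_bound: "\<bar>B\<bar> \<le> 42/10 * (\<epsilon> * \<bar>h1\<bar>) + 21/10 * (\<epsilon> * \<bar>x * h2\<bar>)"
    by (simp add: algebra_simps)
  have "0 \<le> \<epsilon> * \<bar>x * h2\<bar>" using g(1) by simp
  then have "\<bar>A + B\<bar> \<le> 7 * (\<epsilon> * \<bar>h1\<bar>) + 7 * (\<epsilon> * \<bar>x * h2\<bar>)"
    using A_bound B_bound abs_triangle_ineq[of A B] by linarith
  then have "\<bar>A + B\<bar> \<le> 7 * \<epsilon> * (\<bar>h1\<bar> + \<bar>x * h2\<bar>)"
    by (simp add: algebra_simps)
  then have "(A + B)^2 \<le> 2 * (7 * \<epsilon>)^2 * (h1^2 + (x * h2)^2)"
    by (rule square_le_of_abs_le_sum)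
  also have "\<dots> = (98 * \<epsilon>) * (\<epsilon> * (h1^2 + x^2 * h2^2))"
    by (simp add: power2_eq_square)
  also have "\<dots> \<le> \<epsilon> * (h1^2 + x^2 * h2^2)"
    using g \<epsilon> by (intro mult_left_le_one_le) auto
  finally show ?thesis unfolding A_def B_def .
qed

lemma weighted_dxt_le_dxt_entropy:
  fixes P S h1 h2 g0 g1 g2 x \<epsilon> :: real
  assumes P: "99/100 \<le> P" and S: "98/100 \<le> S" "S \<le> 102/100"
    and g: "\<bar>g0\<bar> < \<epsilon>" "\<bar>x * g1\<bar> < \<epsilon>" and \<epsilon>: "\<epsilon> \<le> 1/100"
  shows "(x * g2 + (2 * S / P + 2) * g1)^2
    \<le> 3 * (2 * g1 / P - 2 * h1 * g0 / P^2 + ((2 * g1 + x * g2) / S - (2 * h1 + x * h2) * (g0 + x * g1) / S^2))^2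
      + 2 * \<epsilon> * (h1^2 + x^2 * h2^2)"
    (is "_ \<le> 3 * ?H^2 + _")
proof -
  define H where "H = ?H"
  define E where "E = 2 * h1 * g0 * S / P^2 + (2 * h1 + x * h2) * (g0 + x * g1) / S"
  have square_add: "(u + w)^2 \<le> 2 * u^2 + 2 * w^2" for u w :: real
    using zero_le_power2[of "u - w"] by (simp add: power2_eq_square algebra_simps)
  have "x * g2 + (2 * S / P + 2) * g1 = S * H + E"
    using P S unfolding E_def H_def by (simp add: field_simps power2_eq_square)
  then have "(x * g2 + (2 * S / P + 2) * g1)^2 \<le> 2 * (S * H)^2 + 2 * E^2"
    using square_add by presburger
  moreover have "2 * S^2 \<le> 3"
    using power_mono[OF S(2), of 2] S(1) by (simp add: power2_eq_square)
  then have "2 * (S * H)^2 \<le> 3 * H^2"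
    using mult_right_mono[of "2 * S^2" 3 "H^2"] by (simp add: power_mult_distrib)
  moreover have "E^2 \<le> \<epsilon> * (h1^2 + x^2 * h2^2)"
    unfolding E_def using assms by (rule entropy_dt_error_bound)
  ultimately show ?thesis unfolding H_def by linarith
qed

lemma log_prod_derivative_eq:
  fixes P S a b :: real
  assumes "P \<noteq> 0" "S \<noteq> 0"
  shows "inverse (P^2 * S) * (2 * P * a * S + P^2 * b) = 2 * a / P + b / S"
  using assms by (simp add: field_simps power2_eq_square)

lemma quotient_derivative_eq:
  fixes P a a' P' :: real
  assumes "P \<noteq> 0"
  shows "(a' * P - a * P') / (P * P) = a' / P - a * P' / P^2"
  using assms by (simp add: field_simps power2_eq_square)

lemma dx_rel_entropy_eq:
  assumes smooth: "smooth_on_rect R T h" and x: "x \<in> {0<..<R}" and t: "t \<in> {0<..<T}"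
    and P: "0 < 1 + h x t" and S: "0 < 1 + h x t + x * dx h x t"
  shows "dx (rel_entropy h) x t
    = 2 * dx h x t / (1 + h x t) + (2 * dx h x t + x * dx (dx h) x t) / (1 + h x t + x * dx h x t)"
proof -
  have "((\<lambda>y. h y t) has_real_derivative dx h x t) (at x)"
    and "((\<lambda>y. dx h y t) has_real_derivative dx (dx h) x t) (at x)"
    using smooth_on_rect_has_dx[OF smooth x t, of "[]"] smooth_on_rect_has_dx[OF smooth x t, of "[True]"] by simp_all
  then have "((\<lambda>y. (1 + h y t)^2 * (1 + h y t + y * dx h y t)) has_real_derivative
      2 * (1 + h x t) * dx h x t * (1 + h x t + x * dx h x t)
      + (1 + h x t)^2 * (2 * dx h x t + x * dx (dx h) x t)) (at x)"
    by (auto intro!: derivative_eq_intros simp: algebra_simps power2_eq_square)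
  from DERIV_chain2[OF DERIV_ln this] P S
  have "((\<lambda>y. ln ((1 + h y t)^2 * (1 + h y t + y * dx h y t))) has_real_derivative
      2 * dx h x t / (1 + h x t) + (2 * dx h x t + x * dx (dx h) x t) / (1 + h x t + x * dx h x t)) (at x)"
    by (simp only: log_prod_derivative_eq) simp
  then show ?thesis
    by (simp add: DERIV_imp_deriv dx_def rel_entropy_def)
qed

lemma dt_dx_rel_entropy_eq:
  assumes smooth: "smooth_on_rect R T h" and x: "x \<in> {0<..<R}" and t: "t \<in> {0<..<T}"
    and P: "\<And>s. s \<in> {0<..<T} \<Longrightarrow> 0 < 1 + h x s"
    and S: "\<And>s. s \<in> {0<..<T} \<Longrightarrow> 0 < 1 + h x s + x * dx h x s"
  shows "dt (dx (rel_entropy h)) x t =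
     2 * dt (dx h) x t / (1 + h x t) - 2 * dx h x t * dt h x t / (1 + h x t)^2
     + ((2 * dt (dx h) x t + x * dt (dx (dx h)) x t) / (1 + h x t + x * dx h x t)
       - (2 * dx h x t + x * dx (dx h) x t) * (dt h x t + x * dt (dx h) x t) / (1 + h x t + x * dx h x t)^2)"
    (is "_ = ?D")
proof -
  have dh: "((\<lambda>s. h x s) has_real_derivative dt h x t) (at t)"
    and dhx: "((\<lambda>s. dx h x s) has_real_derivative dt (dx h) x t) (at t)"
    and dhxx: "((\<lambda>s. dx (dx h) x s) has_real_derivative dt (dx (dx h)) x t) (at t)"
    using smooth_on_rect_has_dt[OF smooth x t, of "[]"] smooth_on_rect_has_dt[OF smooth x t, of "[True]"]
      smooth_on_rect_has_dt[OF smooth x t, of "[True, True]"] by simp_all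
  have A1: "((\<lambda>s. 2 * dx h x s) has_real_derivative 2 * dt (dx h) x t) (at t)"
    by (rule DERIV_cmult[OF dhx])
  have B1: "((\<lambda>s. 1 + h x s) has_real_derivative dt h x t) (at t)"
    using DERIV_add[OF DERIV_const[of 1] dh] by simp
  have A2: "((\<lambda>s. 2 * dx h x s + x * dx (dx h) x s) has_real_derivative
      2 * dt (dx h) x t + x * dt (dx (dx h)) x t) (at t)"
    by (rule DERIV_add[OF A1 DERIV_cmult[OF dhxx]])
  have B2: "((\<lambda>s. 1 + h x s + x * dx h x s) has_real_derivative dt h x t + x * dt (dx h) x t) (at t)"
    by (rule DERIV_add[OF B1 DERIV_cmult[OF dhx]])
  have nz: "1 + h x t \<noteq> 0" "1 + h x t + x * dx h x t \<noteq> 0" using P[OF t] S[OF t] by auto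
  have "((\<lambda>s. 2 * dx h x s / (1 + h x s) + (2 * dx h x s + x * dx (dx h) x s) / (1 + h x s + x * dx h x s))
      has_real_derivative ?D) (at t)"
    using DERIV_add[OF DERIV_divide[OF A1 B1 nz(1)] DERIV_divide[OF A2 B2 nz(2)]]
    unfolding quotient_derivative_eq[OF nz(1)] quotient_derivative_eq[OF nz(2)] .
  then have "((\<lambda>s. dx (rel_entropy h) x s) has_real_derivative ?D) (at t)"
    by (rule has_field_derivative_transform_within_open[OF _ _ t])
      (use smooth x P S in \<open>auto simp: dx_rel_entropy_eq\<close>)
  then show ?thesis
    unfolding dt_def[of "dx (rel_entropy h)"] by (rule DERIV_imp_deriv)
qed

(* (1 + h + x h_x) H(h)_x = x h_xx + entropy_weight h * h_x, see weighted_dx_le_dx_entropy. *)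
definition entropy_weight :: "(real \<Rightarrow> real \<Rightarrow> real) \<Rightarrow> real \<Rightarrow> real \<Rightarrow> real" where
  "entropy_weight h x t = 2 * (1 + h x t + x * dx h x t) / (1 + h x t) + 2"

lemma sup_abs_less_imp_abs_less:
  assumes "sup_abs R T f < ereal e" "x \<in> {0<..<R}" "t \<in> {0<..<T}"
  shows "\<bar>f x t\<bar> < e"
proof -
  have "ereal \<bar>f x t\<bar> \<le> sup_abs R T f"
    unfolding sup_abs_def by (rule SUP_upper2[of "(x, t)"]) (use assms in auto)
  then have "ereal \<bar>f x t\<bar> < ereal e" using assms(1) by (rule le_less_trans)
  then show ?thesis by simp
qed

context
  fixes R0 T \<epsilon> :: real and h :: "real \<Rightarrow> real \<Rightarrow> real"
  assumes smooth: "smooth_on_rect R0 T h"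
    and \<epsilon>: "0 < \<epsilon>" "\<epsilon> \<le> 1/100"
    and h_small: "\<And>x t. x \<in> {0<..<R0} \<Longrightarrow> t \<in> {0<..<T} \<Longrightarrow> \<bar>h x t\<bar> < \<epsilon>"
    and x_hx_small: "\<And>x t. x \<in> {0<..<R0} \<Longrightarrow> t \<in> {0<..<T} \<Longrightarrow> \<bar>x * dx h x t\<bar> < \<epsilon>"
begin

lemma entropy_factor_bounds:
  assumes "x \<in> {0<..<R0}" "t \<in> {0<..<T}"
  shows "99/100 \<le> 1 + h x t" "98/100 \<le> 1 + h x t + x * dx h x t" "1 + h x t + x * dx h x t \<le> 102/100"
  using h_small[OF assms] x_hx_small[OF assms] \<epsilon> by (auto simp: abs_less_iff)

lemma dx_rel_entropy_expand:
  assumes "x \<in> {0<..<R0}" "t \<in> {0<..<T}"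
  shows "dx (rel_entropy h) x t
    = 2 * dx h x t / (1 + h x t) + (2 * dx h x t + x * dx (dx h) x t) / (1 + h x t + x * dx h x t)"
  using entropy_factor_bounds[OF assms] by (intro dx_rel_entropy_eq[OF smooth assms]) auto

lemma dt_dx_rel_entropy_expand:
  assumes "x \<in> {0<..<R0}" "t \<in> {0<..<T}"
  shows "dt (dx (rel_entropy h)) x t =
     2 * dt (dx h) x t / (1 + h x t) - 2 * dx h x t * dt h x t / (1 + h x t)^2
     + ((2 * dt (dx h) x t + x * dt (dx (dx h)) x t) / (1 + h x t + x * dx h x t)
       - (2 * dx h x t + x * dx (dx h) x t) * (dt h x t + x * dt (dx h) x t) / (1 + h x t + x * dx h x t)^2)"
  using entropy_factor_bounds[OF assms(1)] by (intro dt_dx_rel_entropy_eq[OF smooth assms]) force+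

lemma entropy_weight_near_4:
  assumes "x \<in> {0<..<R0}" "t \<in> {0<..<T}"
  shows "\<bar>entropy_weight h x t - 4\<bar> \<le> 1/2"
  unfolding entropy_weight_def
  using entropy_factor_bounds[OF assms] x_hx_small[OF assms] \<epsilon>
  by (intro abs_weight_sub_4_le) auto

context
  fixes t :: real
  assumes t: "t \<in> {0<..<T}"
begin

lemma partial_slice_cont: "continuous_on {0<..<R0} (\<lambda>x. iter_partial ws h x t)"
  by (rule smooth_on_rect_continuous_on_slice[OF smooth t])

lemma entropy_weight_cont: "continuous_on {0<..<R0} (\<lambda>x. entropy_weight h x t)"
  unfolding entropy_weight_def
  using partial_slice_cont[of "[]"] partial_slice_cont[of "[True]"] entropy_factor_bounds[OF _ t]
  by (intro continuous_intros) force+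

lemma dx_rel_entropy_cont: "continuous_on {0<..<R0} (\<lambda>x. dx (rel_entropy h) x t)"
proof (rule continuous_on_eq)
  show "continuous_on {0<..<R0} (\<lambda>x. 2 * dx h x t / (1 + h x t)
      + (2 * dx h x t + x * dx (dx h) x t) / (1 + h x t + x * dx h x t))"
    using partial_slice_cont[of "[]"] partial_slice_cont[of "[True]"] partial_slice_cont[of "[True, True]"]
      entropy_factor_bounds[OF _ t]
    by (intro continuous_intros) force+
qed (simp add: dx_rel_entropy_expand[OF _ t])

lemma dt_dx_rel_entropy_cont: "continuous_on {0<..<R0} (\<lambda>x. dt (dx (rel_entropy h)) x t)"
proof (rule continuous_on_eq)
  show "continuous_on {0<..<R0} (\<lambda>x.
     2 * dt (dx h) x t / (1 + h x t) - 2 * dx h x t * dt h x t / (1 + h x t)^2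
     + ((2 * dt (dx h) x t + x * dt (dx (dx h)) x t) / (1 + h x t + x * dx h x t)
       - (2 * dx h x t + x * dx (dx h) x t) * (dt h x t + x * dt (dx h) x t) / (1 + h x t + x * dx h x t)^2))"
    using partial_slice_cont[of "[]"] partial_slice_cont[of "[True]"] partial_slice_cont[of "[True, True]"]
      partial_slice_cont[of "[False]"] partial_slice_cont[of "[False, True]"] partial_slice_cont[of "[False, True, True]"]
      entropy_factor_bounds[OF _ t]
    by (intro continuous_intros) force+
qed (simp add: dt_dx_rel_entropy_expand[OF _ t])

lemma dx_energy_le_dx_entropy:
  assumes "0 < R0"
  shows "(\<integral>\<^sup>+x\<in>{0<..<R0}. ennreal ((dx h x t)^2 + x^2 * (dx (dx h) x t)^2) \<partial>lborel)
    \<le> 8 * (\<integral>\<^sup>+x\<in>{0<..<R0}. ennreal ((dx (rel_entropy h) x t)^2) \<partial>lborel)"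
proof -
  have "(\<integral>\<^sup>+x\<in>{0<..<R0}. ennreal ((dx h x t)^2 + x^2 * (dx (dx h) x t)^2) \<partial>lborel)
      \<le> 4 * (\<integral>\<^sup>+x\<in>{0<..<R0}. ennreal ((x * dx (dx h) x t + entropy_weight h x t * dx h x t)^2) \<partial>lborel)"
  proof (rule hardy_nn_integral[where M = \<epsilon>])
    show "((\<lambda>x. dx h x t) has_real_derivative dx (dx h) x t) (at x)" if "0 < x" "x < R0" for x
      using smooth_on_rect_has_dx[OF smooth _ t, of x "[True]"] that by simp
    show "\<bar>x * dx h x t\<bar> \<le> \<epsilon>" if "0 < x" "x < R0" for x
      using x_hx_small[OF _ t, of x] that by simp
  qed (use assms entropy_weight_cont entropy_weight_near_4[OF _ t] partial_slice_cont[of "[True, True]"] in auto)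
  also have "\<dots> \<le> 4 * (\<integral>\<^sup>+x\<in>{0<..<R0}. ennreal (2 * (dx (rel_entropy h) x t)^2) \<partial>lborel)"
  proof (intro mult_left_mono set_nn_integral_ennreal_mono)
    fix x assume x: "x \<in> {0<..<R0}"
    show "(x * dx (dx h) x t + entropy_weight h x t * dx h x t)^2 \<le> 2 * (dx (rel_entropy h) x t)^2"
      unfolding entropy_weight_def dx_rel_entropy_expand[OF x t]
    proof (rule weighted_dx_le_dx_entropy)
      have "(1 + h x t + x * dx h x t)^2 \<le> (102/100)^2"
        using entropy_factor_bounds[OF x t] by (intro power_mono) auto
      then show "(1 + h x t + x * dx h x t)^2 \<le> 2"
        by (rule order_trans) (simp add: power2_eq_square)
    qed (use entropy_factor_bounds[OF x t] in auto)
  qed simp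
  also have "\<dots> = 8 * (\<integral>\<^sup>+x\<in>{0<..<R0}. ennreal ((dx (rel_entropy h) x t)^2) \<partial>lborel)"
    using dx_rel_entropy_cont by (simp add: set_nn_integral_ennreal_cmult continuous_intros mult.assoc[symmetric])
  finally show ?thesis .
qed

lemma dxt_energy_le_dxt_entropy:
  assumes "0 < R0"
    and ht_small: "\<And>x. x \<in> {0<..<R0} \<Longrightarrow> \<bar>dt h x t\<bar> < \<epsilon>"
    and x_hxt_small: "\<And>x. x \<in> {0<..<R0} \<Longrightarrow> \<bar>x * dt (dx h) x t\<bar> < \<epsilon>"
  shows "(\<integral>\<^sup>+x\<in>{0<..<R0}. ennreal ((dt (dx h) x t)^2 + x^2 * (dt (dx (dx h)) x t)^2) \<partial>lborel)
    \<le> 12 * (\<integral>\<^sup>+x\<in>{0<..<R0}. ennreal ((dt (dx (rel_entropy h)) x t)^2) \<partial>lborel)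
      + ennreal (8 * \<epsilon>) * (\<integral>\<^sup>+x\<in>{0<..<R0}. ennreal ((dx h x t)^2 + x^2 * (dx (dx h) x t)^2) \<partial>lborel)"
proof -
  have "(\<integral>\<^sup>+x\<in>{0<..<R0}. ennreal ((dt (dx h) x t)^2 + x^2 * (dt (dx (dx h)) x t)^2) \<partial>lborel)
      \<le> 4 * (\<integral>\<^sup>+x\<in>{0<..<R0}. ennreal ((x * dt (dx (dx h)) x t + entropy_weight h x t * dt (dx h) x t)^2) \<partial>lborel)"
  proof (rule hardy_nn_integral[where M = \<epsilon>])
    show "((\<lambda>x. dt (dx h) x t) has_real_derivative dt (dx (dx h)) x t) (at x)" if "0 < x" "x < R0" for x
      using smooth_on_rect_has_dx_dt_dx[OF smooth _ t, of x] that by simp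
    show "\<bar>x * dt (dx h) x t\<bar> \<le> \<epsilon>" if "0 < x" "x < R0" for x
      using x_hxt_small[of x] that by simp
  qed (use assms entropy_weight_cont entropy_weight_near_4[OF _ t] partial_slice_cont[of "[False, True, True]"] in auto)
  also have "\<dots> \<le> 4 * (\<integral>\<^sup>+x\<in>{0<..<R0}. ennreal (3 * (dt (dx (rel_entropy h)) x t)^2
      + 2 * \<epsilon> * ((dx h x t)^2 + x^2 * (dx (dx h) x t)^2)) \<partial>lborel)"
  proof (intro mult_left_mono set_nn_integral_ennreal_mono)
    fix x assume x: "x \<in> {0<..<R0}"
    show "(x * dt (dx (dx h)) x t + entropy_weight h x t * dt (dx h) x t)^2
        \<le> 3 * (dt (dx (rel_entropy h)) x t)^2 + 2 * \<epsilon> * ((dx h x t)^2 + x^2 * (dx (dx h) x t)^2)"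
      unfolding entropy_weight_def dt_dx_rel_entropy_expand[OF x t]
      using entropy_factor_bounds[OF x t] ht_small[OF x] x_hxt_small[OF x] \<epsilon>
      by (intro weighted_dxt_le_dxt_entropy) auto
  qed simp
  also have "\<dots> = 4 * (ennreal 3 * (\<integral>\<^sup>+x\<in>{0<..<R0}. ennreal ((dt (dx (rel_entropy h)) x t)^2) \<partial>lborel)
      + ennreal (2 * \<epsilon>) * (\<integral>\<^sup>+x\<in>{0<..<R0}. ennreal ((dx h x t)^2 + x^2 * (dx (dx h) x t)^2) \<partial>lborel))"
    using \<epsilon> dt_dx_rel_entropy_cont partial_slice_cont[of "[True]"] partial_slice_cont[of "[True, True]"]
    by (subst set_nn_integral_ennreal_lincomb) (auto intro!: continuous_intros)
  also have "\<dots> = 12 * (\<integral>\<^sup>+x\<in>{0<..<R0}. ennreal ((dt (dx (rel_entropy h)) x t)^2) \<partial>lborel)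
      + ennreal (8 * \<epsilon>) * (\<integral>\<^sup>+x\<in>{0<..<R0}. ennreal ((dx h x t)^2 + x^2 * (dx (dx h) x t)^2) \<partial>lborel)"
    using ennreal_mult'[of 4 "2 * \<epsilon>"] by (simp add: distrib_left mult.assoc[symmetric])
  finally show ?thesis .
qed

end

end

lemma rel_entropy_controls_energies:
  fixes h :: "real \<Rightarrow> real \<Rightarrow> real"
  assumes R0: "0 < R0" and smooth: "smooth_on_rect R0 T h"
    and \<epsilon>: "0 < \<epsilon>" "\<epsilon> < 1/100" and t: "t \<in> {0<..<T}"
    and small: "max (max (sup_abs R0 T h) (sup_abs R0 T (\<lambda>x t. x * dx h x t)))
      (max (sup_abs R0 T (dt h)) (sup_abs R0 T (\<lambda>x t. x * dt (dx h) x t))) < ereal \<epsilon>"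
  shows "(\<integral>\<^sup>+x\<in>{0<..<R0}. ennreal ((dx h x t)^2 + x^2 * (dx (dx h) x t)^2) \<partial>lborel)
      \<le> ennreal 12 * (\<integral>\<^sup>+x\<in>{0<..<R0}. ennreal ((dx (rel_entropy h) x t)^2) \<partial>lborel)"
    and "(\<integral>\<^sup>+x\<in>{0<..<R0}. ennreal ((dt (dx h) x t)^2 + x^2 * (dt (dx (dx h)) x t)^2) \<partial>lborel)
      \<le> ennreal 12 * (\<integral>\<^sup>+x\<in>{0<..<R0}. ennreal ((dt (dx (rel_entropy h)) x t)^2) \<partial>lborel)
        + ennreal (12 * \<epsilon>) * (\<integral>\<^sup>+x\<in>{0<..<R0}. ennreal ((dx h x t)^2 + x^2 * (dx (dx h) x t)^2) \<partial>lborel)"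
proof -
  have sup: "sup_abs R0 T h < ereal \<epsilon>" "sup_abs R0 T (\<lambda>x t. x * dx h x t) < ereal \<epsilon>"
    "sup_abs R0 T (dt h) < ereal \<epsilon>" "sup_abs R0 T (\<lambda>x t. x * dt (dx h) x t) < ereal \<epsilon>"
    using small by simp_all
  have "\<bar>h x s\<bar> < \<epsilon>" "\<bar>x * dx h x s\<bar> < \<epsilon>" "\<bar>dt h x s\<bar> < \<epsilon>" "\<bar>x * dt (dx h) x s\<bar> < \<epsilon>"
    if "x \<in> {0<..<R0}" "s \<in> {0<..<T}" for x s
    using sup[THEN sup_abs_less_imp_abs_less, OF that] by simp_all
  note estimates = dx_energy_le_dx_entropy[OF smooth \<epsilon>(1) _ this(1,2) t R0]
    dxt_energy_le_dxt_entropy[OF smooth \<epsilon>(1) _ this(1,2) t R0 this(3,4)[OF _ t]]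
  show "(\<integral>\<^sup>+x\<in>{0<..<R0}. ennreal ((dx h x t)^2 + x^2 * (dx (dx h) x t)^2) \<partial>lborel)
      \<le> ennreal 12 * (\<integral>\<^sup>+x\<in>{0<..<R0}. ennreal ((dx (rel_entropy h) x t)^2) \<partial>lborel)"
    using \<epsilon> estimates(1) by (auto elim!: order_trans intro!: mult_right_mono)
  show "(\<integral>\<^sup>+x\<in>{0<..<R0}. ennreal ((dt (dx h) x t)^2 + x^2 * (dt (dx (dx h)) x t)^2) \<partial>lborel)
      \<le> ennreal 12 * (\<integral>\<^sup>+x\<in>{0<..<R0}. ennreal ((dt (dx (rel_entropy h)) x t)^2) \<partial>lborel)
        + ennreal (12 * \<epsilon>) * (\<integral>\<^sup>+x\<in>{0<..<R0}. ennreal ((dx h x t)^2 + x^2 * (dx (dx h) x t)^2) \<partial>lborel)"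
    using \<epsilon> estimates(2) by (auto elim!: order_trans intro!: add_mono mult_right_mono ennreal_leI)
qed

theorem lemma2p2:
  "\<exists>\<epsilon>s::real. 0 < \<epsilon>s \<and> \<epsilon>s < 1 \<and> (\<exists>C::real. C > 0 \<and>
     (\<forall>R0 T h \<epsilon>. 0 < R0 \<longrightarrow> 0 < T \<longrightarrow> smooth_on_rect R0 T h \<longrightarrow>
        0 < \<epsilon> \<longrightarrow> \<epsilon> < \<epsilon>s \<longrightarrow>
        max (max (sup_abs R0 T h) (sup_abs R0 T (\<lambda>x t. x * dx h x t)))
            (max (sup_abs R0 T (dt h)) (sup_abs R0 T (\<lambda>x t. x * dt (dx h) x t))) < ereal \<epsilon> \<longrightarrow>
        (\<forall>t\<in>{0<..<T}.
           (\<integral>\<^sup>+x\<in>{0<..<R0}. ennreal ((dx h x t)^2 + x^2 * (dx (dx h) x t)^2) \<partial>lborel)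
             \<le> ennreal C * (\<integral>\<^sup>+x\<in>{0<..<R0}. ennreal ((dx (rel_entropy h) x t)^2) \<partial>lborel) \<and>
           (\<integral>\<^sup>+x\<in>{0<..<R0}. ennreal ((dt (dx h) x t)^2 + x^2 * (dt (dx (dx h)) x t)^2) \<partial>lborel)
             \<le> ennreal C * (\<integral>\<^sup>+x\<in>{0<..<R0}. ennreal ((dt (dx (rel_entropy h)) x t)^2) \<partial>lborel)
               + ennreal (C * \<epsilon>) * (\<integral>\<^sup>+x\<in>{0<..<R0}. ennreal ((dx h x t)^2 + x^2 * (dx (dx h) x t)^2) \<partial>lborel))))"
  by (rule exI[of _ "1/100"], intro conjI exI[of _ 12] allI impI ballI)
    (blast intro: rel_entropy_controls_energies | simp)+

end
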